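(* Consider the setting below. Fix an agent $i\in\mathcal I$ and a time $t\in\mathbb Z_+$ at which problem $\mathcal P_i(t)$ is feasible, and let $\bigl(\{x^{\mathrm n,\ast}_{i,(k|t)}\},\{u^{\mathrm n,\ast}_{i,(k|t)}\},\{x^{\mathrm c,\ast}_{i,(k|t)}\}_{k=0}^{N_{\mathrm c}},\{u^{\mathrm c,\ast}_{i,(k|t)}\}_{k=0}^{N_{\mathrm c}-1},\bar x^{\mathrm c,\ast}_i(t),\bar u^{\mathrm c,\ast}_i(t)\bigr)$ be the (optimal) feasible solution used in closed loop, so that $x_i(t+1)=f_i(x_i(t),u^{\mathrm c,\ast}_{i,(0|t)})$ and $S_i^\ast(t+1)$ is obtained from the freeze-or-shift rule. Define at time $t+1$ \[ \tilde x^{\mathrm c}_{i,(k|t+1)}:=x^{\mathrm c,\ast}_{i,(k+1|t)}\ (k=0,\dots,N_{\mathrm c}-1),\qquad \tilde u^{\mathrm c}_{i,(k|t+1)}:=u^{\mathrm c,\ast}_{i,(k+1|t)}\ (k=0,\dots,N_{\mathrm c}-2), \] \[ \tilde u^{\mathrm c}_{i,(N_{\mathrm c}-1|t+1)}:=\bar u^{\mathrm c,\ast}_i(t),\qquad \tilde x^{\mathrm c}_{i,(N_{\mathrm c}|t+1)}:=f_i\bigl(\tilde x^{\mathrm c}_{i,(N_{\mathrm c}-1|t+1)},\tilde u^{\mathrm c}_{i,(N_{\mathrm c}-1|t+1)}\bigr), \] \[ \tilde{\bar x}^{\mathrm c}_i(t+1):=\bar x^{\mathrm c,\ast}_i(t),\qquad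 \tilde{\bar u}^{\mathrm c}_i(t+1):=\bar u^{\mathrm c,\ast}_i(t). \] Then this candidate satisfies, at time $t+1$ (with data $x_i(t+1)$ and $S_i^\ast(t+1)=\mathbb B(c_i(t+1),R_i(t+1))$), all contingency-part constraints (C1)–(C8) of $\mathcal P_i(t+1)$ listed below, namely the contingency initialization, contingency dynamics, contingency state/input bounds, static-obstacle constraints, terminal-state and terminal-equilibrium constraints, terminal position constraint, active safe-set containment and tail-containment constraints.
   Context: Setting. Agents $\mathcal I=\{1,\dots,M\}$. Agent $i$ has dynamics $x_i(t+1)=f_i(x_i(t),u_i(t))$, $x_i\in\mathbb R^{n_i}$, $u_i\in\mathbb R^{m_i}$, admissible sets $\mathcal X_i\subset\mathbb R^{n_i}$, $\mathcal U_i\subset\mathbb R^{m_i}$, position $p_i=C_ix_i\in\mathbb R^{n_p}$, body radius $r_i>0$, body $\mathcal B_i(t)=\mathbb B(p_i(t),r_i)$ (closed Euclidean ball), reference state $x_i^{\mathrm{ref}}$. A deterministic safe-set generator $\Gamma_i$ assigns to each $x\in\mathcal X_i$ a ball $\Gamma_i(x)=\mathbb B(c_i(x),R_i(x))$. The active safe set at time $t$ is $S_i^\ast(t)=\mathbb B(c_i(t),R_i(t))$. $h:\mathbb R^{n_p}\to\mathbb R$ is a continuous obstacle function. Horizons $N_{\mathrm n},N_{\mathrm c}\in\mathbb Z_{>0}$. Costs: nominal stage and terminal costs $\ell_i^{\mathrm n},V_i^{\mathrm n}$, nonnegative offset cost $V_i^{\mathrm c}$, nonnegative contingency stage cost $\ell_i^{\mathrm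 c}$, weight $\gamma>0$. Problem $\mathcal P_i(t)$ (given $x_i(t)$, $S_i^\ast(t)$ and a bound $\hat J_i^{\mathrm c}(t)\ge0$): decision variables $x^{\mathrm n}_{i,(k|t)}$ ($k=0..N_{\mathrm n}$), $u^{\mathrm n}_{i,(k|t)}$ ($k=0..N_{\mathrm n}-1$), $x^{\mathrm c}_{i,(k|t)}$ ($k=0..N_{\mathrm c}$), $u^{\mathrm c}_{i,(k|t)}$ ($k=0..N_{\mathrm c}-1$), $\bar x^{\mathrm c}_i(t),\bar u^{\mathrm c}_i(t)$; write $p^\bullet_{i,(k|t)}=C_ix^\bullet_{i,(k|t)}$. Minimize $J_i=\sum_{k=0}^{N_{\mathrm n}-1}\ell_i^{\mathrm n}(x^{\mathrm n}_{i,(k|t)},u^{\mathrm n}_{i,(k|t)})+V_i^{\mathrm n}(x^{\mathrm n}_{i,(N_{\mathrm n}|t)},x_i^{\mathrm{ref}})+\gamma V_i^{\mathrm c}(\bar x^{\mathrm c}_i(t),x_i^{\mathrm{ref}})$ subject to: (N1) $x^{\mathrm n}_{i,(0|t)}=x_i(t)$; (N2) $u^{\mathrm n}_{i,(0|t)}=u^{\mathrm c}_{i,(0|t)}$; (N3) $x^{\mathrm n}_{i,(k+1|t)}=f_i(x^{\mathrm n}_{i,(k|t)},u^{\mathrm n}_{i,(k|t)})$, $x^{\mathrm n}_{i,(k+1|t)}\in\mathcal X_i$, $u^{\mathrm n}_{i,(k|t)}\in\mathcal U_i$ for $k=0..N_{\mathrm n}-1$; (C1) $x^{\mathrm c}_{i,(0|t)}=x_i(t)$;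 (C2) $x^{\mathrm c}_{i,(k+1|t)}=f_i(x^{\mathrm c}_{i,(k|t)},u^{\mathrm c}_{i,(k|t)})$ for $k=0..N_{\mathrm c}-1$; (C3) $x^{\mathrm c}_{i,(k+1|t)}\in\mathcal X_i$, $u^{\mathrm c}_{i,(k|t)}\in\mathcal U_i$ for $k=0..N_{\mathrm c}-1$; (C4) $h(p^{\mathrm c}_{i,(k|t)})\ge0$ for $k=0..N_{\mathrm c}$; (C5) $x^{\mathrm c}_{i,(N_{\mathrm c}|t)}=\bar x^{\mathrm c}_i(t)$, $\bar x^{\mathrm c}_i(t)=f_i(\bar x^{\mathrm c}_i(t),\bar u^{\mathrm c}_i(t))$, $(\bar x^{\mathrm c}_i(t),\bar u^{\mathrm c}_i(t))\in\mathcal X_i\times\mathcal U_i$; (C6) $C_i\bar x^{\mathrm c}_i(t)\in S_i^\ast(t)$; (C7) $\|p^{\mathrm c}_{i,(k|t)}-c_i(t)\|\le R_i(t)-r_i$ for $k=0..N_{\mathrm c}$; (C8) $\|p^{\mathrm c}_{i,(l|t)}-c_i(x^{\mathrm c}_{i,(k|t)})\|\le R_i(x^{\mathrm c}_{i,(k|t)})-r_i$ for all $0\le k\le l\le N_{\mathrm c}$; (L) $J_i^{\mathrm c}(t)\le\hat J_i^{\mathrm c}(t)$, where $J_i^{\mathrm c}(t):=\sum_{k=0}^{N_{\mathrm c}-1}\ell_i^{\mathrm c}(x^{\mathrm c}_{i,(k|t)}-\bar x^{\mathrm c}_i(t),u^{\mathrm c}_{i,(k|t)}-\bar u^{\mathrm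 c}_i(t))+V_i^{\mathrm c}(\bar x^{\mathrm c}_i(t),x_i^{\mathrm{ref}})$. Closed loop: at each $t$ each agent solves $\mathcal P_i(t)$, a star denotes the optimal solution, $J_i^{\mathrm c,\ast}(t)$ is $J_i^{\mathrm c}$ evaluated at it, the input $u_i(t)=u^{\mathrm c,\ast}_{i,(0|t)}=u^{\mathrm n,\ast}_{i,(0|t)}$ is applied and the state evolves exactly by $x_i(t+1)=f_i(x_i(t),u_i(t))$. Bound update: $\hat J_i^{\mathrm c}(t+1):=J_i^{\mathrm c,\ast}(t)-\ell_i^{\mathrm c}(x_i(t)-\bar x^{\mathrm c,\ast}_i(t),u_i(t)-\bar u^{\mathrm c,\ast}_i(t))$. Freeze-or-shift (FoS) update: $\tilde S_i(t+1):=\Gamma_i(x_i(t+1))$; $\chi_i(t)=1$ if some $j\neq i$ has $\tilde S_i(t+1)\cap\tilde S_j(t+1)\neq\emptyset$ or $\tilde S_i(t+1)\cap S_j^\ast(t)\neq\emptyset$, else $\chi_i(t)=0$; $S_i^\ast(t+1)=S_i^\ast(t)$ if $\chi_i(t)=1$ and $S_i^\ast(t+1)=\tilde S_i(t+1)$ if $\chi_i(t)=0$. *)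

theory Defs
  imports "HOL-Analysis.Analysis"
begin

(* Agent i: state x :: real^'n, input u :: real^'m, position p = C *v x :: real^'d.
   Safe-set generator Gamma_i(x) = cball (cG x) (RG x).
   Active safe set S*_i(t) = cball c R, represented by its centre and radius. *)

definition contingency_constraints ::
  "(real^'n \<Rightarrow> real^'m \<Rightarrow> real^'n) \<Rightarrow> (real^'n) set \<Rightarrow> (real^'m) set \<Rightarrow> real^'n^'d \<Rightarrow>
   (real^'d \<Rightarrow> real) \<Rightarrow> nat \<Rightarrow> real \<Rightarrow> (real^'n \<Rightarrow> real^'d) \<Rightarrow> (real^'n \<Rightarrow> real) \<Rightarrow>
   real^'n \<Rightarrow> real^'d \<Rightarrow> real \<Rightarrow>
   (nat \<Rightarrow> real^'n) \<Rightarrow> (nat \<Rightarrow> real^'m) \<Rightarrow> real^'n \<Rightarrow> real^'m \<Rightarrow> bool" where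
  "contingency_constraints f Xs Us C h Nc r cG RG x0 c R xc uc xbar ubar \<longleftrightarrow>
     \<comment> \<open>(C1)\<close> xc 0 = x0
   \<and> \<comment> \<open>(C2)\<close> (\<forall>k<Nc. xc (Suc k) = f (xc k) (uc k))
   \<and> \<comment> \<open>(C3)\<close> (\<forall>k<Nc. xc (Suc k) \<in> Xs \<and> uc k \<in> Us)
   \<and> \<comment> \<open>(C4)\<close> (\<forall>k\<le>Nc. h (C *v xc k) \<ge> 0)
   \<and> \<comment> \<open>(C5)\<close> xc Nc = xbar \<and> xbar = f xbar ubar \<and> xbar \<in> Xs \<and> ubar \<in> Us
   \<and> \<comment> \<open>(C6)\<close> C *v xbar \<in> cball c R
   \<and> \<comment> \<open>(C7)\<close> (\<forall>k\<le>Nc. norm (C *v xc k - c) \<le> R - r)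
   \<and> \<comment> \<open>(C8)\<close> (\<forall>k l. k \<le> l \<and> l \<le> Nc \<longrightarrow> norm (C *v xc l - cG (xc k)) \<le> RG (xc k) - r)"

definition nominal_constraints ::
  "(real^'n \<Rightarrow> real^'m \<Rightarrow> real^'n) \<Rightarrow> (real^'n) set \<Rightarrow> (real^'m) set \<Rightarrow> nat \<Rightarrow>
   real^'n \<Rightarrow> (nat \<Rightarrow> real^'n) \<Rightarrow> (nat \<Rightarrow> real^'m) \<Rightarrow> (nat \<Rightarrow> real^'m) \<Rightarrow> bool" where
  "nominal_constraints f Xs Us Nn x0 xn un uc \<longleftrightarrow>
     xn 0 = x0 \<and> un 0 = uc 0
   \<and> (\<forall>k<Nn. xn (Suc k) = f (xn k) (un k) \<and> xn (Suc k) \<in> Xs \<and> un k \<in> Us)"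

definition contingency_cost ::
  "(real^'n \<Rightarrow> real^'m \<Rightarrow> real) \<Rightarrow> (real^'n \<Rightarrow> real^'n \<Rightarrow> real) \<Rightarrow> nat \<Rightarrow> real^'n \<Rightarrow>
   (nat \<Rightarrow> real^'n) \<Rightarrow> (nat \<Rightarrow> real^'m) \<Rightarrow> real^'n \<Rightarrow> real^'m \<Rightarrow> real" where
  "contingency_cost lc Vc Nc xref xc uc xbar ubar =
     (\<Sum>k<Nc. lc (xc k - xbar) (uc k - ubar)) + Vc xbar xref"

definition objective ::
  "(real^'n \<Rightarrow> real^'m \<Rightarrow> real) \<Rightarrow> (real^'n \<Rightarrow> real^'n \<Rightarrow> real) \<Rightarrow> (real^'n \<Rightarrow> real^'n \<Rightarrow> real) \<Rightarrow>
   real \<Rightarrow> nat \<Rightarrow> real^'n \<Rightarrow> (nat \<Rightarrow> real^'n) \<Rightarrow> (nat \<Rightarrow> real^'m) \<Rightarrow> real^'n \<Rightarrow> real" where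
  "objective lnom Vn Vc \<gamma> Nn xref xn un xbar =
     (\<Sum>k<Nn. lnom (xn k) (un k)) + Vn (xn Nn) xref + \<gamma> * Vc xbar xref"

definition P_feasible where
  "P_feasible f Xs Us C h Nn Nc r cG RG lc Vc xref x0 c R Jhat xn un xc uc xbar ubar \<longleftrightarrow>
     nominal_constraints f Xs Us Nn x0 xn un uc
   \<and> contingency_constraints f Xs Us C h Nc r cG RG x0 c R xc uc xbar ubar
   \<and> contingency_cost lc Vc Nc xref xc uc xbar ubar \<le> Jhat"

definition P_optimal where
  "P_optimal f Xs Us C h Nn Nc r cG RG lnom Vn lc Vc \<gamma> xref x0 c R Jhat xn un xc uc xbar ubar \<longleftrightarrow>
     P_feasible f Xs Us C h Nn Nc r cG RG lc Vc xref x0 c R Jhat xn un xc uc xbar ubar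
   \<and> (\<forall>xn' un' xc' uc' xbar' ubar'.
        P_feasible f Xs Us C h Nn Nc r cG RG lc Vc xref x0 c R Jhat xn' un' xc' uc' xbar' ubar' \<longrightarrow>
        objective lnom Vn Vc \<gamma> Nn xref xn un xbar \<le> objective lnom Vn Vc \<gamma> Nn xref xn' un' xbar')"

text \<open>Freeze-or-shift indicator chi_i(t). The agents are the index set I; for j the
  proposed set tilde S_j(t+1) = cball (cT j) (RT j) and the active set S*_j(t) = cball (cS j) (RS j).\<close>
definition fos_chi ::
  "nat set \<Rightarrow> nat \<Rightarrow> (nat \<Rightarrow> real^'d) \<Rightarrow> (nat \<Rightarrow> real) \<Rightarrow> (nat \<Rightarrow> real^'d) \<Rightarrow> (nat \<Rightarrow> real) \<Rightarrow> bool" where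
  "fos_chi I i cT RT cS RS \<longleftrightarrow>
     (\<exists>j\<in>I. j \<noteq> i \<and> (cball (cT i) (RT i) \<inter> cball (cT j) (RT j) \<noteq> {}
                      \<or> cball (cT i) (RT i) \<inter> cball (cS j) (RS j) \<noteq> {}))"

end

theory Submission
  imports Defs
begin

text \<open>The shifted candidate is the old contingency trajectory re-indexed by the monotone map
  k \<mapsto> min (k + 1) Nc, i.e. it follows the old plan one step later and then rests at the
  equilibrium. Hence (C1)-(C5) and (C8) are inherited, and (C6)-(C7) only need the new active
  safe set to contain the old trajectory from step 1 on: a frozen set does so by the old (C7),
  the shifted set Gamma(x(t+1)) = Gamma(x(1|t)) by the old (C8) with k = 1.\<close>

lemma shifted_trajectory_eq:
  assumes "0 < Nc" and "\<forall>k<Nc. xt k = xc (Suc k)"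
    and "xc Nc = xbar" and "xbar = f xbar ubar"
    and "ut (Nc - 1) = ubar" and "xt Nc = f (xt (Nc - 1)) (ut (Nc - 1))"
    and "k \<le> Nc"
  shows "xt k = xc (min (Suc k) Nc)"
proof (cases "k = Nc")
  case True
  have "xt (Nc - 1) = xbar" using assms(1-3) by (metis Suc_pred' diff_less zero_less_one)
  with True assms(3-6) show ?thesis by simp
next
  case False
  with assms(2,7) show ?thesis by simp
qed

lemma contingency_constraints_shift:
  fixes C :: "real^'n^'d"
  assumes old: "contingency_constraints f Xs Us C h Nc r cG RG x0 c R xc uc xbar ubar"
    and "0 < Nc" and "0 \<le> r"
    and xt: "\<forall>k<Nc. xt k = xc (Suc k)"
    and ut: "\<forall>k<Nc - 1. ut k = uc (Suc k)"
    and ut_last: "ut (Nc - 1) = ubar"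
    and xt_last: "xt Nc = f (xt (Nc - 1)) (ut (Nc - 1))"
    and safe_set: "\<forall>k\<in>{1..Nc}. norm (C *v xc k - c') \<le> R' - r"
  shows "contingency_constraints f Xs Us C h Nc r cG RG (xc 1) c' R' xt ut xbar ubar"
proof -
  have dyn: "\<forall>k<Nc. xc (Suc k) = f (xc k) (uc k)"
    and bounds: "\<forall>k<Nc. xc (Suc k) \<in> Xs \<and> uc k \<in> Us"
    and obstacle: "\<forall>k\<le>Nc. h (C *v xc k) \<ge> 0"
    and terminal: "xc Nc = xbar" "xbar = f xbar ubar" "xbar \<in> Xs" "ubar \<in> Us"
    and tail_containment:
      "\<forall>k l. k \<le> l \<and> l \<le> Nc \<longrightarrow> norm (C *v xc l - cG (xc k)) \<le> RG (xc k) - r"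
    using old unfolding contingency_constraints_def by blast+
  define s where "s k = min (Suc k) Nc" for k
  have eq: "xt k = xc (s k)" if "k \<le> Nc" for k
    unfolding s_def
    using shifted_trajectory_eq[of Nc xt xc xbar f ubar ut k] \<open>0 < Nc\<close> xt terminal(1,2)
      ut_last xt_last that
    by blast
  have s_range: "s k \<in> {1..Nc}" for k
    using \<open>0 < Nc\<close> by (simp add: s_def)
  have s_mono: "s k \<le> s l" if "k \<le> l" for k l
    using that by (simp add: s_def)
  have step: "xt (Suc k) = f (xt k) (ut k) \<and> xt (Suc k) \<in> Xs \<and> ut k \<in> Us" if "k < Nc" for k
  proof (cases "Suc k = Nc")
    case True
    then have "xt (Suc k) = xbar" "ut k = ubar" using eq[of Nc] terminal(1) ut_last
      by (auto simp: s_def)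
    then show ?thesis using True xt_last terminal(3,4) by auto
  next
    case False
    then have k: "Suc k < Nc" "k < Nc - 1" using that by auto
    then have "xt (Suc k) = xc (Suc (Suc k))" "xt k = xc (Suc k)" "ut k = uc (Suc k)"
      using xt ut by auto
    then show ?thesis using dyn bounds k(1) by auto
  qed
  have "norm (C *v xt k - c') \<le> R' - r" if "k \<le> Nc" for k
    using safe_set s_range eq that by auto
  moreover have "C *v xbar \<in> cball c' R'"
  proof -
    have "norm (C *v xbar - c') \<le> R' - r"
      using safe_set \<open>0 < Nc\<close> terminal(1) by force
    then show ?thesis using \<open>0 \<le> r\<close> by (simp add: dist_norm norm_minus_commute)
  qed
  moreover have "norm (C *v xt l - cG (xt k)) \<le> RG (xt k) - r" if "k \<le> l" "l \<le> Nc" for k l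
    using that eq tail_containment s_mono s_range[of l] by auto
  moreover have "h (C *v xt k) \<ge> 0" if "k \<le> Nc" for k
    using that eq obstacle s_range[of k] by auto
  moreover have "xt 0 = xc 1" using xt \<open>0 < Nc\<close> by auto
  moreover have "xt Nc = xbar" using eq[of Nc] terminal(1) by (simp add: s_def)
  ultimately show ?thesis
    unfolding contingency_constraints_def using step terminal(2-4) by blast
qed

theorem lemmaA1:
  fixes f :: "real^'n \<Rightarrow> real^'m \<Rightarrow> real^'n"
    and Xs :: "(real^'n) set" and Us :: "(real^'m) set"
    and C :: "real^'n^'d" and h :: "real^'d \<Rightarrow> real"
    and Nn Nc :: nat and r :: real
    and cG :: "real^'n \<Rightarrow> real^'d" and RG :: "real^'n \<Rightarrow> real"
    and lnom :: "real^'n \<Rightarrow> real^'m \<Rightarrow> real" and Vn Vc :: "real^'n \<Rightarrow> real^'n \<Rightarrow> real"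
    and lc :: "real^'n \<Rightarrow> real^'m \<Rightarrow> real" and \<gamma> :: real and xref :: "real^'n"
    and I :: "nat set" and i :: nat
    and cT :: "nat \<Rightarrow> real^'d" and RT :: "nat \<Rightarrow> real"
    and cS :: "nat \<Rightarrow> real^'d" and RS :: "nat \<Rightarrow> real"
    and x_t x_t1 :: "real^'n" and Jhat :: real and c_t1 :: "real^'d" and R_t1 :: real
    and xn xc :: "nat \<Rightarrow> real^'n" and un uc :: "nat \<Rightarrow> real^'m"
    and xbar :: "real^'n" and ubar :: "real^'m"
    and xt :: "nat \<Rightarrow> real^'n" and ut :: "nat \<Rightarrow> real^'m"
  assumes finI: "finite I" and iI: "i \<in> I"
    and r_pos: "r > 0" and h_cont: "continuous_on UNIV h"
    and Nn_pos: "Nn > 0" and Nc_pos: "Nc > 0"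
    and Vc_nonneg: "\<forall>x y. Vc x y \<ge> 0" and lc_nonneg: "\<forall>x u. lc x u \<ge> 0"
    and gamma_pos: "\<gamma> > 0" and Jhat_nonneg: "Jhat \<ge> 0"
    and xt_X: "x_t \<in> Xs"
    \<comment> \<open>optimal solution of P_i(t), with data x_i(t) = x_t, S*_i(t) = cball (cS i) (RS i)\<close>
    and opt: "P_optimal f Xs Us C h Nn Nc r cG RG lnom Vn lc Vc \<gamma> xref x_t (cS i) (RS i) Jhat
                 xn un xc uc xbar ubar"
    \<comment> \<open>closed-loop state update\<close>
    and x_next: "x_t1 = f x_t (uc 0)"
    \<comment> \<open>freeze-or-shift: tilde S_i(t+1) = Gamma_i(x_i(t+1))\<close>
    and tilde_i: "cT i = cG x_t1" "RT i = RG x_t1"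
    and fos: "(c_t1, R_t1) = (if fos_chi I i cT RT cS RS then (cS i, RS i) else (cT i, RT i))"
    \<comment> \<open>shifted candidate at time t+1\<close>
    and xt_def: "\<forall>k<Nc. xt k = xc (Suc k)"
    and ut_def: "\<forall>k<Nc - 1. ut k = uc (Suc k)"
    and ut_last: "ut (Nc - 1) = ubar"
    and xt_last: "xt Nc = f (xt (Nc - 1)) (ut (Nc - 1))"
  shows "contingency_constraints f Xs Us C h Nc r cG RG x_t1 c_t1 R_t1 xt ut xbar ubar"
proof -
  have old: "contingency_constraints f Xs Us C h Nc r cG RG x_t (cS i) (RS i) xc uc xbar ubar"
    using opt unfolding P_optimal_def P_feasible_def by blast
  have x_t1: "xc 1 = x_t1"
    using old Nc_pos x_next unfolding contingency_constraints_def by auto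
  have "\<forall>k\<in>{1..Nc}. norm (C *v xc k - c_t1) \<le> R_t1 - r"
  proof (cases "fos_chi I i cT RT cS RS")
    case True
    then show ?thesis using fos old unfolding contingency_constraints_def by auto
  next
    case False
    then have "c_t1 = cG (xc 1)" "R_t1 = RG (xc 1)" using fos tilde_i x_t1 by auto
    moreover have "\<forall>k l. k \<le> l \<and> l \<le> Nc \<longrightarrow> norm (C *v xc l - cG (xc k)) \<le> RG (xc k) - r"
      using old unfolding contingency_constraints_def by blast
    ultimately show ?thesis by auto
  qed
  then show ?thesis
    using contingency_constraints_shift[OF old Nc_pos _ xt_def ut_def ut_last xt_last] r_pos x_t1
    by simp
qed

end
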